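(* Let $V$ be a finite vocabulary, each word $x\in V$ having a nonempty perturbation set $P_x\subseteq V$. For words $x,x'$ write $n_x=|P_x|$, $n_{x'}=|P_{x'}|$ and $n_{x,x'}=|P_x\cap P_{x'}|$. For $X=x_1,\ldots,x_L\in V^L$ let $\Pi_X$ be the probability mass function on $V^L$ with $\Pi_X(Z)=\prod_{i=1}^L\mathbb{I}\{z_i\in P_{x_i}\}/|P_{x_i}|$. Then for any sentences $X=x_1,\ldots,x_L$ and $X'=x'_1,\ldots,x'_L$ in $V^L$ and any $\lambda\ge0$, $$\sum_{Z\in V^L}\big(\lambda\Pi_X(Z)-\Pi_{X'}(Z)\big)_+=\lambda\Big[1-\prod_{j\in[L],x_j\ne x'_j}\frac{n_{x_j,x'_j}}{n_{x_j}}\Big]+\Big[\prod_{j\in[L],x_j\ne x'_j}\frac{n_{x_j,x'_j}}{n_{x_j}}\Big]\Big(\lambda-\prod_{j\in[L],x_j\ne x'_j}\frac{n_{x_j}}{n_{x'_j}}\Big)_+,$$ where $(s)_+=\max(s,0)$. Consequently, if $x'_j\in S_{x_j}$ for all $j$ and $|P_x|=|P_{x'}|$ for every word $x$ and every $x'\in S_x$ (where $S_x\subseteq V$ are given synonym sets), then $$\sum_{Z\in V^L}\big(\lambda\Pi_X(Z)-\Pi_{X'}(Z)\big)_+=\lambda\Big[1-\prod_{j\in[L],x_j\ne x'_j}\frac{n_{x_j,x'_j}}{n_{x_j}}\Big]+\Big[\prod_{j\in[L],x_j\ne x'_j}\frac{n_{x_j,x'_j}}{n_{x_j}}\Big](\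lambda-1)_+.$$
   Context: Empty products equal $1$. *)

theory Defs
  imports Complex_Main
begin

definition sentences :: "'a set \<Rightarrow> nat \<Rightarrow> 'a list set" where
  "sentences V L = {Z. length Z = L \<and> set Z \<subseteq> V}"

definition pert_pmf :: "('a \<Rightarrow> 'a set) \<Rightarrow> 'a list \<Rightarrow> 'a list \<Rightarrow> real" where
  "pert_pmf P X Z = (\<Prod>i<length X. (if Z ! i \<in> P (X ! i) then 1 else 0) / real (card (P (X ! i))))"

definition pos_part :: "real \<Rightarrow> real" where
  "pos_part s = max s 0"

end

theory Submission
  imports Defs
begin

text \<open>\<open>\<Pi>\<^sub>X\<close> is uniform on the box \<open>A\<^sub>X = P\<^sub>x\<^sub>1 \<times> \<dots> \<times> P\<^sub>x\<^sub>L\<close>, with value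
  \<open>c = 1/|A\<^sub>X|\<close>, and vanishes outside it; likewise \<open>\<Pi>\<^sub>X\<^sub>'\<close> has value \<open>c'\<close> on \<open>A\<^sub>X\<^sub>'\<close>.
  So the summand is \<open>0\<close> outside \<open>A\<^sub>X\<close>, \<open>\<lambda>c\<close> on \<open>A\<^sub>X - A\<^sub>X\<^sub>'\<close>, and
  \<open>(\<lambda>c - c')\<^sub>+ = c (\<lambda> - c'/c)\<^sub>+\<close> on \<open>B = A\<^sub>X \<inter> A\<^sub>X\<^sub>'\<close>. Now \<open>c |B|\<close> and \<open>c'/c\<close> are the two
  products of the statement (the factors with \<open>x\<^sub>j = x'\<^sub>j\<close> cancel), and under the synonym
  hypothesis \<open>c'/c = 1\<close>.\<close>

definition lists_box :: "nat \<Rightarrow> (nat \<Rightarrow> 'a set) \<Rightarrow> 'a list set" where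
  "lists_box L F = {Z. length Z = L \<and> (\<forall>i<L. Z ! i \<in> F i)}"

lemma lists_box_Suc:
  "lists_box (Suc L) F = (\<lambda>(a, Z). a # Z) ` (F 0 \<times> lists_box L (\<lambda>i. F (Suc i)))"
proof (rule set_eqI, rule iffI)
  fix Z assume "Z \<in> lists_box (Suc L) F"
  then obtain a W where "Z = a # W" "length W = L" "\<forall>i<Suc L. (a # W) ! i \<in> F i"
    by (auto simp: lists_box_def length_Suc_conv)
  then show "Z \<in> (\<lambda>(a, Z). a # Z) ` (F 0 \<times> lists_box L (\<lambda>i. F (Suc i)))"
    by (force simp: lists_box_def)
qed (auto simp: lists_box_def less_Suc_eq_0_disj)

lemma card_lists_box:
  "(\<And>i. i < L \<Longrightarrow> finite (F i)) \<Longrightarrow> card (lists_box L F) = (\<Prod>i<L. card (F i))"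
proof (induction L arbitrary: F)
  case 0
  have "lists_box 0 F = {[]}" by (auto simp: lists_box_def)
  then show ?case by simp
next
  case (Suc L)
  have "inj_on (\<lambda>(a, Z). a # Z) (F 0 \<times> lists_box L (\<lambda>i. F (Suc i)))"
    by (auto simp: inj_on_def)
  then show ?case
    using Suc by (simp add: lists_box_Suc card_image card_cartesian_product prod.lessThan_Suc_shift
        del: prod.lessThan_Suc)
qed

lemma lists_box_Int: "lists_box L F \<inter> lists_box L G = lists_box L (\<lambda>i. F i \<inter> G i)"
  by (auto simp: lists_box_def)

lemma card_lists_box_mult_prod_inverse_card:
  assumes "\<And>i. i < L \<Longrightarrow> finite (F i) \<and> F i \<noteq> {}"
  shows "(\<Prod>i<L. 1 / real (card (F i))) * real (card (lists_box L F)) = 1"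
proof -
  have "(\<Prod>i<L. 1 / real (card (F i))) * real (card (lists_box L F))
        = (\<Prod>i<L. 1 / real (card (F i))) * (\<Prod>i<L. real (card (F i)))"
    using assms by (simp add: card_lists_box)
  also have "\<dots> = (\<Prod>i<L. 1 / real (card (F i)) * real (card (F i)))"
    by (rule prod.distrib[symmetric])
  also have "\<dots> = 1"
    using assms by (intro prod.neutral) simp
  finally show ?thesis .
qed

lemma lists_box_subset_sentences:
  "(\<And>i. i < L \<Longrightarrow> F i \<subseteq> V) \<Longrightarrow> lists_box L F \<subseteq> sentences V L"
  by (force simp: lists_box_def sentences_def set_conv_nth)

lemma finite_sentences: "finite V \<Longrightarrow> finite (sentences V L)"
  using finite_lists_length_eq by (simp add: sentences_def conj_commute)

lemma pos_part_mult_left: "c \<ge> 0 \<Longrightarrow> pos_part (c * x) = c * pos_part x"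
  by (simp add: pos_part_def max_mult_distrib_left)

lemma pert_pmf_nonneg: "pert_pmf P X Z \<ge> 0"
  unfolding pert_pmf_def by (auto intro: prod_nonneg)

lemma pert_pmf_eq:
  assumes "length Z = length X"
  shows "pert_pmf P X Z = (if Z \<in> lists_box (length X) (\<lambda>i. P (X ! i))
                            then \<Prod>i<length X. 1 / real (card (P (X ! i))) else 0)"
  using assms by (auto simp: pert_pmf_def lists_box_def intro!: prod.cong prod_zero)

lemma sum_pos_part_nested_constant:
  fixes f g :: "'b \<Rightarrow> real"
  assumes "finite U" "B \<subseteq> A" "A \<subseteq> U" "lam \<ge> 0" "c \<ge> 0" "\<And>Z. g Z \<ge> 0"
    and "\<And>Z. Z \<in> U - A \<Longrightarrow> f Z = 0" "\<And>Z. Z \<in> A \<Longrightarrow> f Z = c"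
    and "\<And>Z. Z \<in> A - B \<Longrightarrow> g Z = 0" "\<And>Z. Z \<in> B \<Longrightarrow> g Z = c'"
  shows "(\<Sum>Z\<in>U. pos_part (lam * f Z - g Z))
           = lam * c * (real (card A) - real (card B)) + real (card B) * pos_part (lam * c - c')"
proof -
  have finA: "finite A" and finB: "finite B"
    using assms(1-3) by (auto intro: finite_subset)
  have "(\<Sum>Z\<in>U. pos_part (lam * f Z - g Z))
        = (\<Sum>Z\<in>U - A. pos_part (lam * f Z - g Z)) + (\<Sum>Z\<in>A. pos_part (lam * f Z - g Z))"
    by (rule sum.subset_diff[OF assms(3,1)])
  also have "(\<Sum>Z\<in>A. pos_part (lam * f Z - g Z))
        = (\<Sum>Z\<in>A - B. pos_part (lam * f Z - g Z)) + (\<Sum>Z\<in>B. pos_part (lam * f Z - g Z))"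
    by (rule sum.subset_diff[OF assms(2) finA])
  also have "(\<Sum>Z\<in>U - A. pos_part (lam * f Z - g Z)) = 0"
    using assms(6,7) by (simp add: pos_part_def)
  also have "(\<Sum>Z\<in>A - B. pos_part (lam * f Z - g Z)) = real (card (A - B)) * (lam * c)"
    using assms(2,4,5,8,9) by (simp add: pos_part_def)
  also have "(\<Sum>Z\<in>B. pos_part (lam * f Z - g Z)) = real (card B) * pos_part (lam * c - c')"
    using assms(2,8,10) by (simp add: subset_iff)
  also have "real (card (A - B)) = real (card A) - real (card B)"
    using card_Diff_subset[OF finB assms(2)] card_mono[OF finA assms(2)] by simp
  finally show ?thesis by (simp add: algebra_simps)
qed

lemma prod_lessThan_eq_prod_diff_positions:
  assumes "\<And>i. i < L \<Longrightarrow> X ! i = X' ! i \<Longrightarrow> f i = 1"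
  shows "(\<Prod>i<L. f i) = (\<Prod>j\<in>{j. j < L \<and> X ! j \<noteq> X' ! j}. f j)"
  using assms by (intro prod.mono_neutral_right) auto

lemma hockey_stick_pert_pmf:
  assumes "finite V" "\<And>x. x \<in> V \<Longrightarrow> P x \<subseteq> V \<and> P x \<noteq> {}"
    and "X \<in> sentences V L" "X' \<in> sentences V L" "lam \<ge> 0"
  shows "(\<Sum>Z\<in>sentences V L. pos_part (lam * pert_pmf P X Z - pert_pmf P X' Z)) =
           lam * (1 - (\<Prod>j\<in>{j. j < L \<and> X ! j \<noteq> X' ! j}.
                    real (card (P (X ! j) \<inter> P (X' ! j))) / real (card (P (X ! j)))))
         + (\<Prod>j\<in>{j. j < L \<and> X ! j \<noteq> X' ! j}.
                    real (card (P (X ! j) \<inter> P (X' ! j))) / real (card (P (X ! j))))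
           * pos_part (lam - (\<Prod>j\<in>{j. j < L \<and> X ! j \<noteq> X' ! j}.
                    real (card (P (X ! j))) / real (card (P (X' ! j)))))"
    (is "_ = lam * (1 - ?m) + ?m * pos_part (lam - ?r)")
proof -
  define n where "n Y i = real (card (P (Y ! i)))" for Y i
  define c where "c Y = (\<Prod>i<L. 1 / n Y i)" for Y
  define A where "A Y = lists_box L (\<lambda>i. P (Y ! i))" for Y
  have pert_sets: "P (Y ! i) \<subseteq> V" "finite (P (Y ! i))" "P (Y ! i) \<noteq> {}" "n Y i > 0"
    if "Y \<in> sentences V L" "i < L" for Y i
  proof -
    have "Y ! i \<in> V" using that by (auto simp: sentences_def)
    then show "P (Y ! i) \<subseteq> V" "finite (P (Y ! i))" "P (Y ! i) \<noteq> {}" "n Y i > 0"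
      using assms(1,2) by (auto simp: n_def card_gt_0_iff intro: finite_subset)
  qed
  have pmf: "pert_pmf P Y Z = (if Z \<in> A Y then c Y else 0)"
    if "Y \<in> sentences V L" "Z \<in> sentences V L" for Y Z
    using that pert_pmf_eq[of Z Y P] by (simp add: sentences_def A_def c_def n_def)
  have A_sentences: "A Y \<subseteq> sentences V L" if "Y \<in> sentences V L" for Y
    using pert_sets(1)[OF that] by (simp add: A_def lists_box_subset_sentences)
  have sum_eq: "(\<Sum>Z\<in>sentences V L. pos_part (lam * pert_pmf P X Z - pert_pmf P X' Z))
        = lam * c X * (real (card (A X)) - real (card (A X \<inter> A X')))
          + real (card (A X \<inter> A X')) * pos_part (lam * c X - c X')"
  proof (rule sum_pos_part_nested_constant)
    show "c X \<ge> 0" by (simp add: c_def n_def prod_nonneg)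
  qed (use assms(1,3-5) A_sentences pmf pert_pmf_nonneg subsetD[OF A_sentences[OF assms(3)]]
        in \<open>auto simp: finite_sentences\<close>)
  have cX_pos: "c X > 0"
    using pert_sets(4)[OF assms(3)] by (auto simp: c_def intro!: prod_pos)
  have card_A: "c X * real (card (A X)) = 1"
    using pert_sets(2,3)[OF assms(3)] card_lists_box_mult_prod_inverse_card[of L "\<lambda>i. P (X ! i)"]
    by (simp add: A_def c_def n_def)
  have card_Int: "c X * real (card (A X \<inter> A X')) = ?m"
  proof -
    have "c X * real (card (A X \<inter> A X'))
          = (\<Prod>i<L. real (card (P (X ! i) \<inter> P (X' ! i))) / real (card (P (X ! i))))"
      using pert_sets(2)[OF assms(3)]
      by (simp add: A_def c_def n_def lists_box_Int card_lists_box prod.distrib[symmetric])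
    also have "\<dots> = ?m"
      using pert_sets(4)[OF assms(4)] by (intro prod_lessThan_eq_prod_diff_positions) (simp add: n_def)
    finally show ?thesis .
  qed
  have ratio: "c X' = c X * ?r"
  proof -
    have "c X' = (\<Prod>i<L. 1 / n X i * (n X i / n X' i))"
      using pert_sets(4)[OF assms(3)] unfolding c_def by (intro prod.cong) (auto simp: less_le)
    also have "\<dots> = c X * (\<Prod>i<L. n X i / n X' i)"
      unfolding c_def by (rule prod.distrib)
    also have "(\<Prod>i<L. n X i / n X' i) = ?r"
      using pert_sets(4)[OF assms(4)] unfolding n_def by (intro prod_lessThan_eq_prod_diff_positions) simp
    finally show ?thesis .
  qed
  show ?thesis
    using sum_eq card_A card_Int ratio pos_part_mult_left[of "c X" "lam - ?r"] cX_pos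
    by (simp add: algebra_simps)
qed

theorem lemma2:
  fixes V :: "'a set" and P S :: "'a \<Rightarrow> 'a set" and L :: nat
    and X X' :: "'a list" and lam :: real
  assumes "finite V"
    and "\<And>x. x \<in> V \<Longrightarrow> P x \<subseteq> V \<and> P x \<noteq> {}"
    and "\<And>x. x \<in> V \<Longrightarrow> S x \<subseteq> V"
    and "X \<in> sentences V L" and "X' \<in> sentences V L"
    and "lam \<ge> 0"
  shows "(\<Sum>Z\<in>sentences V L. pos_part (lam * pert_pmf P X Z - pert_pmf P X' Z)) =
           lam * (1 - (\<Prod>j\<in>{j. j < L \<and> X ! j \<noteq> X' ! j}.
                    real (card (P (X ! j) \<inter> P (X' ! j))) / real (card (P (X ! j)))))
         + (\<Prod>j\<in>{j. j < L \<and> X ! j \<noteq> X' ! j}.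
                    real (card (P (X ! j) \<inter> P (X' ! j))) / real (card (P (X ! j))))
           * pos_part (lam - (\<Prod>j\<in>{j. j < L \<and> X ! j \<noteq> X' ! j}.
                    real (card (P (X ! j))) / real (card (P (X' ! j)))))
       \<and> ((\<forall>j<L. X' ! j \<in> S (X ! j)) \<and> (\<forall>x\<in>V. \<forall>x'\<in>S x. card (P x) = card (P x'))
          \<longrightarrow> (\<Sum>Z\<in>sentences V L. pos_part (lam * pert_pmf P X Z - pert_pmf P X' Z)) =
           lam * (1 - (\<Prod>j\<in>{j. j < L \<and> X ! j \<noteq> X' ! j}.
                    real (card (P (X ! j) \<inter> P (X' ! j))) / real (card (P (X ! j)))))
         + (\<Prod>j\<in>{j. j < L \<and> X ! j \<noteq> X' ! j}.
                    real (card (P (X ! j) \<inter> P (X' ! j))) / real (card (P (X ! j))))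
           * pos_part (lam - 1))"
proof -
  have "(\<Prod>j\<in>{j. j < L \<and> X ! j \<noteq> X' ! j}.
           real (card (P (X ! j))) / real (card (P (X' ! j)))) = 1"
    if synonyms: "\<forall>j<L. X' ! j \<in> S (X ! j)" and same_card: "\<forall>x\<in>V. \<forall>x'\<in>S x. card (P x) = card (P x')"
  proof (rule prod.neutral, clarify)
    fix j assume "j < L"
    then have "X ! j \<in> V"
      using assms(4) by (auto simp: sentences_def)
    then have "card (P (X ! j)) \<noteq> 0"
      using assms(1,2) by (metis card_eq_0_iff finite_subset)
    moreover have "card (P (X ! j)) = card (P (X' ! j))"
      using synonyms same_card \<open>j < L\<close> \<open>X ! j \<in> V\<close> by blast
    ultimately show "real (card (P (X ! j))) / real (card (P (X' ! j))) = 1"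
      by simp
  qed
  then show ?thesis
    using hockey_stick_pert_pmf[OF assms(1,2,4-6)] by simp
qed

end
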